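(* Let $n\ge 1$ and $U_n$ the family of bounded subsets of $\mathbb R^n$. (a) For every function $g:\mathbb R^n\to B_2$ whose support $\mathrm{supp}\,g=\{x:g(x)=1\}$ is locally finite, the function $\mu^g:U_n\to B_2$, $\mu^g(A)=\pi(|A\cap \mathrm{supp}\,g|)$, is a derivable measure, and $d\mu^g(x)=g(x)$ for all $x\in\mathbb R^n$. (b) Conversely, if $\mu:U_n\to B_2$ is a derivable measure, then there exists a unique function $g:\mathbb R^n\to B_2$ with locally finite support such that $\mu(A)=\pi(|A\cap\mathrm{supp}\,g|)$ for all $A\in U_n$; moreover $d\mu(x)=g(x)$ for all $x\in\mathbb R^n$.
   Context: $B_2=\{0,1\}$. $H\subset\mathbb R^n$ is locally finite if $A\cap H$ is finite for every bounded $A$. $\pi(m)=1$ if $m$ is odd, $0$ if even. $\mu$ is a measure if for every sequence of pairwise disjoint sets of $U_n$ whose union is in $U_n$, only finitely many have $\mu$-value 1 and $\mu$ of the union is their number modulo 2. $d(B)=\sup_{x,y\in B}\|x-y\|$. $\mu$ is derivable at $x$ if there exist $\varepsilon>0$, $a\in B_2$ with $\mu(B)=a$ for all $B\in U_n$ containing $x$ with $d(B)<\varepsilon$; then $d\mu(x)=a$. $\mu$ is derivable if it is derivable at every point of $\mathbb R^n$. *)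

theory Defs
  imports "HOL-Analysis.Analysis"
begin

text \<open>B_2 = {0,1} is rendered as bool (True = 1). R^n is an arbitrary euclidean_space
  type 'a (DIM('a) = n \<ge> 1). U_n = bounded subsets; set functions are total on 'a set,
  but only their values on bounded sets are constrained/used.\<close>

definition loc_finite :: "'a::euclidean_space set \<Rightarrow> bool" where
  "loc_finite H \<longleftrightarrow> (\<forall>A. bounded A \<longrightarrow> finite (A \<inter> H))"

definition par :: "nat \<Rightarrow> bool" where
  "par m \<longleftrightarrow> odd m"

definition supp2 :: "('a \<Rightarrow> bool) \<Rightarrow> 'a set" where
  "supp2 g = {x. g x}"

definition b2_measure :: "('a::euclidean_space set \<Rightarrow> bool) \<Rightarrow> bool" where
  "b2_measure \<mu> \<longleftrightarrow>
     (\<forall>S :: nat \<Rightarrow> 'a set. (\<forall>i. bounded (S i)) \<and> disjoint_family S \<and> bounded (\<Union>i. S i)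
        \<longrightarrow> finite {i. \<mu> (S i)} \<and> \<mu> (\<Union>i. S i) = par (card {i. \<mu> (S i)}))"

definition b2_derivable_at :: "('a::euclidean_space set \<Rightarrow> bool) \<Rightarrow> 'a \<Rightarrow> bool" where
  "b2_derivable_at \<mu> x \<longleftrightarrow>
     (\<exists>\<epsilon>>0. \<exists>a. \<forall>B. bounded B \<and> x \<in> B \<and> diameter B < \<epsilon> \<longrightarrow> \<mu> B = a)"

definition b2_deriv :: "('a::euclidean_space set \<Rightarrow> bool) \<Rightarrow> 'a \<Rightarrow> bool" where
  "b2_deriv \<mu> x = (THE a. \<exists>\<epsilon>>0. \<forall>B. bounded B \<and> x \<in> B \<and> diameter B < \<epsilon> \<longrightarrow> \<mu> B = a)"

definition b2_derivable :: "('a::euclidean_space set \<Rightarrow> bool) \<Rightarrow> bool" where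
  "b2_derivable \<mu> \<longleftrightarrow> (\<forall>x. b2_derivable_at \<mu> x)"

definition mu_of :: "('a \<Rightarrow> bool) \<Rightarrow> 'a set \<Rightarrow> bool" where
  "mu_of g A = par (card (A \<inter> supp2 g))"

end

theory Submission
  imports Defs
begin

(* Counting points of a locally finite set modulo 2 is additive, and near each point x
   only x itself can be counted, which gives part (a). Conversely, derivability makes a
   measure constant on all small sets around x; by additivity it then vanishes on small
   sets avoiding x, so g y := \<mu> {y} has isolated, hence (by compactness) locally finite
   support. Both \<mu> and \<mu>^g are additive and agree on subsets of these small balls,
   and a bounded set is covered by finitely many of them, so \<mu> = \<mu>^g. *)

definition b2_additive :: "('a::euclidean_space set \<Rightarrow> bool) \<Rightarrow> bool" where
  "b2_additive \<mu> \<longleftrightarrow>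
     (\<forall>A B. bounded A \<longrightarrow> bounded B \<longrightarrow> A \<inter> B = {} \<longrightarrow> \<mu> (A \<union> B) = (\<mu> A \<noteq> \<mu> B))"

lemma par_add: "par (a + b) = (par a \<noteq> par b)"
  by (auto simp: par_def)

lemma b2_additive_empty:
  assumes "b2_additive \<mu>"
  shows "\<not> \<mu> {}"
  using assms unfolding b2_additive_def by (metis Un_empty bounded_empty inf_bot_left)

lemma b2_measure_empty:
  assumes "b2_measure \<mu>"
  shows "\<not> \<mu> {}"
proof
  assume "\<mu> {}"
  have "finite {i::nat. \<mu> {}}"
    using assms[unfolded b2_measure_def, rule_format, of "\<lambda>_. {}"]
    by (simp add: disjoint_family_on_def)
  with \<open>\<mu> {}\<close> show False by simp
qed

lemma b2_measure_imp_additive: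
  assumes "b2_measure \<mu>"
  shows "b2_additive \<mu>"
  unfolding b2_additive_def
proof (intro allI impI)
  fix A B :: "'a set"
  assume bounded: "bounded A" "bounded B" and disjoint: "A \<inter> B = {}"
  define S :: "nat \<Rightarrow> 'a set" where "S i = (if i = 0 then A else if i = 1 then B else {})" for i
  have union: "(\<Union>i. S i) = A \<union> B"
    by (auto simp: S_def split: if_splits)
  have "\<forall>i. bounded (S i)"
    using bounded by (simp add: S_def)
  moreover have "disjoint_family S"
    using disjoint by (auto simp: S_def disjoint_family_on_def)
  ultimately have "\<mu> (A \<union> B) = par (card {i. \<mu> (S i)})"
    using assms[unfolded b2_measure_def, rule_format, of S] bounded unfolding union by simp
  moreover have "{i. \<mu> (S i)} = (if \<mu> A then {0} else {}) \<union> (if \<mu> B then {1} else {})"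
    using b2_measure_empty[OF assms] by (auto simp: S_def)
  ultimately show "\<mu> (A \<union> B) = (\<mu> A \<noteq> \<mu> B)"
    by (auto simp: par_def)
qed

lemma mu_of_additive:
  assumes "loc_finite (supp2 g)"
  shows "b2_additive (mu_of g)"
  unfolding b2_additive_def
proof (intro allI impI)
  fix A B :: "'a set"
  assume "bounded A" "bounded B" "A \<inter> B = {}"
  then have "card ((A \<union> B) \<inter> supp2 g) = card (A \<inter> supp2 g) + card (B \<inter> supp2 g)"
    using assms unfolding loc_finite_def by (subst card_Un_disjoint[symmetric]) (auto simp: Int_Un_distrib2)
  then show "mu_of g (A \<union> B) = (mu_of g A \<noteq> mu_of g B)"
    by (simp add: mu_of_def par_add)
qed

lemma b2_measure_mu_of:
  assumes lf: "loc_finite (supp2 g)"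
  shows "b2_measure (mu_of g)"
  unfolding b2_measure_def
proof (intro allI impI conjI)
  fix S :: "nat \<Rightarrow> 'a set"
  assume S: "(\<forall>i. bounded (S i)) \<and> disjoint_family S \<and> bounded (\<Union>i. S i)"
  let ?H = "supp2 g"
  define I where "I = {i. S i \<inter> ?H \<noteq> {}}"
  have pieces: "(\<Union>i. S i) \<inter> ?H = (\<Union>i\<in>I. S i \<inter> ?H)"
    by (auto simp: I_def)
  have disjoint: "disjoint_family_on (\<lambda>i. S i \<inter> ?H) I"
    using S by (auto simp: disjoint_family_on_def)
  have "finite I"
  proof (rule ccontr)
    assume "infinite I"
    then have "infinite (\<Union>i\<in>I. S i \<inter> ?H)"
      by (rule infinite_disjoint_family_imp_infinite_UNION[OF _ _ disjoint]) (simp add: I_def)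
    moreover have "finite ((\<Union>i. S i) \<inter> ?H)"
      using lf S unfolding loc_finite_def by blast
    ultimately show False
      unfolding pieces by simp
  qed
  have odd_pieces: "{i. mu_of g (S i)} = {i\<in>I. odd (card (S i \<inter> ?H))}"
    by (auto simp: mu_of_def par_def I_def)
  then show "finite {i. mu_of g (S i)}"
    using \<open>finite I\<close> by simp
  have "card (\<Union>i\<in>I. S i \<inter> ?H) = (\<Sum>i\<in>I. card (S i \<inter> ?H))"
  proof (rule card_UN_disjoint[OF \<open>finite I\<close>])
    show "\<forall>i\<in>I. finite (S i \<inter> ?H)"
      using lf S by (simp add: loc_finite_def)
    show "\<forall>i\<in>I. \<forall>j\<in>I. i \<noteq> j \<longrightarrow> S i \<inter> ?H \<inter> (S j \<inter> ?H) = {}"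
      using disjoint unfolding disjoint_family_on_def .
  qed
  then show "mu_of g (\<Union>i. S i) = par (card {i. mu_of g (S i)})"
    using even_sum_iff[OF \<open>finite I\<close>, of "\<lambda>i. card (S i \<inter> ?H)"]
    unfolding odd_pieces by (simp add: mu_of_def par_def pieces)
qed

lemma mu_of_isolated:
  assumes "U \<inter> supp2 g \<subseteq> {x}" "B \<subseteq> U"
  shows "mu_of g B = (x \<in> B \<and> g x)"
proof -
  have "B \<inter> supp2 g = (if x \<in> B \<and> g x then {x} else {})"
    using assms by (auto simp: supp2_def)
  then show ?thesis
    by (simp add: mu_of_def par_def)
qed

lemma mu_of_singleton: "mu_of g {x} = g x"
  using mu_of_isolated[of "{x}" g x] by auto

lemma loc_finite_isolated:
  assumes "loc_finite H"
  obtains e where "e > 0" "ball x e \<inter> H \<subseteq> {x}"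
proof -
  have "finite (ball x 1 \<inter> H)"
    using assms unfolding loc_finite_def by simp
  then obtain d where "d > 0" and d: "\<forall>y\<in>ball x 1 \<inter> H. y \<noteq> x \<longrightarrow> d \<le> dist x y"
    using finite_set_avoid by blast
  have "ball x (min 1 d) \<inter> H \<subseteq> {x}"
    using d by fastforce
  then show thesis
    using that[of "min 1 d"] \<open>d > 0\<close> by simp
qed

lemma subset_ball_diameter:
  assumes "bounded B" "x \<in> B" "diameter B < e"
  shows "B \<subseteq> ball x e"
  using assms diameter_bounded_bound by fastforce

definition b2_has_deriv :: "('a::euclidean_space set \<Rightarrow> bool) \<Rightarrow> 'a \<Rightarrow> bool \<Rightarrow> bool" where
  "b2_has_deriv \<mu> x a \<longleftrightarrow> (\<exists>\<epsilon>>0. \<forall>B. bounded B \<and> x \<in> B \<and> diameter B < \<epsilon> \<longrightarrow> \<mu> B = a)"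

lemma b2_derivable_at_iff: "b2_derivable_at \<mu> x \<longleftrightarrow> (\<exists>a. b2_has_deriv \<mu> x a)"
  unfolding b2_derivable_at_def b2_has_deriv_def by blast

lemma b2_has_deriv_singleton:
  assumes "b2_has_deriv \<mu> x a"
  shows "\<mu> {x} = a"
proof -
  obtain \<epsilon> where "\<epsilon> > 0" and const: "\<forall>B. bounded B \<and> x \<in> B \<and> diameter B < \<epsilon> \<longrightarrow> \<mu> B = a"
    using assms unfolding b2_has_deriv_def by blast
  show ?thesis
    using \<open>\<epsilon> > 0\<close> by (intro const[rule_format]) simp
qed

lemma b2_deriv_eqI:
  assumes "b2_has_deriv \<mu> x a"
  shows "b2_deriv \<mu> x = a"
proof -
  have "b2_deriv \<mu> x = (THE a. b2_has_deriv \<mu> x a)"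
    by (simp add: b2_deriv_def b2_has_deriv_def)
  also have "\<dots> = a"
    using assms by (rule the_equality) (metis assms b2_has_deriv_singleton)
  finally show ?thesis .
qed

lemma b2_has_deriv_cong:
  assumes "\<And>A. bounded A \<Longrightarrow> \<mu> A = \<nu> A"
  shows "b2_has_deriv \<mu> x a \<longleftrightarrow> b2_has_deriv \<nu> x a"
  unfolding b2_has_deriv_def using assms by simp

lemma mu_of_has_deriv:
  assumes "loc_finite (supp2 g)"
  shows "b2_has_deriv (mu_of g) x (g x)"
proof -
  obtain e where "e > 0" and isolated: "ball x e \<inter> supp2 g \<subseteq> {x}"
    using loc_finite_isolated[OF assms] .
  have "mu_of g B = g x" if "bounded B" "x \<in> B" "diameter B < e" for B
    using mu_of_isolated[OF isolated subset_ball_diameter[OF that]] \<open>x \<in> B\<close> by simp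
  then show ?thesis
    unfolding b2_has_deriv_def using \<open>e > 0\<close> by blast
qed

lemma b2_has_deriv_isolated:
  assumes add: "b2_additive \<mu>" and "b2_has_deriv \<mu> x a"
  obtains r where "r > 0" "\<And>B. B \<subseteq> ball x r \<Longrightarrow> \<mu> B = (x \<in> B \<and> \<mu> {x})"
proof -
  have "\<mu> {x} = a"
    using b2_has_deriv_singleton[OF assms(2)] .
  obtain e where "e > 0" and const: "\<forall>B. bounded B \<and> x \<in> B \<and> diameter B < e \<longrightarrow> \<mu> B = a"
    using assms(2) unfolding b2_has_deriv_def by blast
  have near: "\<mu> B = (x \<in> B \<and> \<mu> {x})" if B: "B \<subseteq> ball x (e / 3)" for B
  proof -
    have "bounded B"
      using B bounded_subset by blast
    have "diameter (insert x B) \<le> diameter (ball x (e / 3))"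
      using B \<open>e > 0\<close> by (intro diameter_subset) auto
    also have "\<dots> < e"
      using \<open>e > 0\<close> by simp
    finally have "\<mu> (insert x B) = a"
      using \<open>bounded B\<close> by (intro const[rule_format]) simp
    show ?thesis
    proof (cases "x \<in> B")
      case True
      then show ?thesis
        using \<open>\<mu> (insert x B) = a\<close> \<open>\<mu> {x} = a\<close> by (simp add: insert_absorb)
    next
      case False
      then have "insert x B = B \<union> {x}" "B \<inter> {x} = {}"
        by auto
      then have "\<mu> (insert x B) = (\<mu> B \<noteq> \<mu> {x})"
        using add[unfolded b2_additive_def, rule_format, of B "{x}"] \<open>bounded B\<close> by simp
      then show ?thesis
        using False \<open>\<mu> (insert x B) = a\<close> \<open>\<mu> {x} = a\<close> by (cases "\<mu> B") simp_all
    qed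
  qed
  show thesis
    by (rule that[of "e / 3", OF _ near]) (use \<open>e > 0\<close> in simp_all)
qed

lemma bounded_finite_ball_cover:
  fixes A :: "'a::heine_borel set"
  assumes "bounded A" "\<And>x. r x > 0"
  obtains F where "finite F" "A \<subseteq> (\<Union>x\<in>F. ball x (r x))"
proof -
  have "closure A \<subseteq> (\<Union>x\<in>closure A. ball x (r x))"
    using assms(2) by auto
  then obtain F where "finite F" "closure A \<subseteq> (\<Union>x\<in>F. ball x (r x))"
    using compactE_image[of "closure A" "closure A" "\<lambda>x. ball x (r x)"] assms(1)
    by (metis compact_closure open_ball)
  then show thesis
    using that closure_subset by blast
qed

lemma loc_finite_if_isolated:
  assumes "\<And>x. r x > 0" "\<And>x. ball x (r x) \<inter> H \<subseteq> {x}"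
  shows "loc_finite H"
  unfolding loc_finite_def
proof (intro allI impI)
  fix A :: "'a set"
  assume "bounded A"
  then obtain F where "finite F" "A \<subseteq> (\<Union>x\<in>F. ball x (r x))"
    using bounded_finite_ball_cover assms(1) by blast
  then have "A \<inter> H \<subseteq> F"
    using assms(2) by blast
  then show "finite (A \<inter> H)"
    using \<open>finite F\<close> finite_subset by blast
qed

lemma b2_additive_split:
  assumes "b2_additive \<mu>" "bounded A"
  shows "\<mu> A = (\<mu> (A - U) \<noteq> \<mu> (A \<inter> U))"
proof -
  have "bounded (A - U)" "bounded (A \<inter> U)" "(A - U) \<inter> (A \<inter> U) = {}"
    using assms(2) by (auto intro: bounded_subset)
  moreover have "(A - U) \<union> (A \<inter> U) = A"
    by blast
  ultimately show ?thesis
    using assms(1) unfolding b2_additive_def by metis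
qed

lemma b2_additive_eq_on_finite_cover:
  assumes "b2_additive \<mu>" "b2_additive \<nu>" "finite \<U>"
    and "\<And>U B. U \<in> \<U> \<Longrightarrow> B \<subseteq> U \<Longrightarrow> \<mu> B = \<nu> B"
    and "bounded A" "A \<subseteq> \<Union>\<U>"
  shows "\<mu> A = \<nu> A"
  using assms(3-6)
proof (induction \<U> arbitrary: A rule: finite_induct)
  case empty
  then have "A = {}"
    by simp
  then show ?case
    using b2_additive_empty[OF assms(1)] b2_additive_empty[OF assms(2)] by simp
next
  case (insert U \<U>)
  have "\<mu> (A - U) = \<nu> (A - U)"
  proof (rule insert.IH)
    show "\<mu> B = \<nu> B" if "U' \<in> \<U>" "B \<subseteq> U'" for U' B
      using insert.prems(1) that by blast
    show "bounded (A - U)"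
      using insert.prems(2) by (rule bounded_subset) blast
    show "A - U \<subseteq> \<Union>\<U>"
      using insert.prems(3) by blast
  qed
  moreover have "\<mu> (A \<inter> U) = \<nu> (A \<inter> U)"
    using insert.prems(1) by blast
  ultimately show ?case
    using b2_additive_split[OF assms(1) insert.prems(2), of U]
      b2_additive_split[OF assms(2) insert.prems(2), of U]
    by simp
qed

lemma b2_derivable_measure_eq_mu_of:
  assumes m: "b2_measure \<mu>" and d: "b2_derivable \<mu>"
  shows "loc_finite (supp2 (\<lambda>y. \<mu> {y}))" "\<And>A. bounded A \<Longrightarrow> \<mu> A = mu_of (\<lambda>y. \<mu> {y}) A"
proof -
  let ?g = "\<lambda>y. \<mu> {y}"
  have add: "b2_additive \<mu>"
    using b2_measure_imp_additive[OF m] .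
  have "\<exists>r>0. \<forall>B. B \<subseteq> ball x r \<longrightarrow> \<mu> B = (x \<in> B \<and> \<mu> {x})" for x
  proof -
    obtain a where "b2_has_deriv \<mu> x a"
      using d unfolding b2_derivable_def b2_derivable_at_iff by blast
    then obtain r where "r > 0" "\<And>B. B \<subseteq> ball x r \<Longrightarrow> \<mu> B = (x \<in> B \<and> \<mu> {x})"
      using b2_has_deriv_isolated[OF add] by blast
    then show ?thesis
      by blast
  qed
  then obtain r where r: "\<And>x. r x > 0"
    and near: "\<And>x B. B \<subseteq> ball x (r x) \<Longrightarrow> \<mu> B = (x \<in> B \<and> \<mu> {x})"
    by metis
  have isolated: "ball x (r x) \<inter> supp2 ?g \<subseteq> {x}" for x
  proof
    fix y
    assume "y \<in> ball x (r x) \<inter> supp2 ?g"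
    then have "{y} \<subseteq> ball x (r x)" "\<mu> {y}"
      by (auto simp: supp2_def)
    then show "y \<in> {x}"
      using near by blast
  qed
  show lf: "loc_finite (supp2 ?g)"
    using loc_finite_if_isolated[OF r isolated] .
  fix A :: "'a set"
  assume "bounded A"
  then obtain F where "finite F" "A \<subseteq> (\<Union>x\<in>F. ball x (r x))"
    using bounded_finite_ball_cover r by blast
  show "\<mu> A = mu_of ?g A"
  proof (rule b2_additive_eq_on_finite_cover[OF add mu_of_additive[OF lf]])
    show "finite ((\<lambda>x. ball x (r x)) ` F)"
      using \<open>finite F\<close> by simp
    show "\<mu> B = mu_of ?g B" if "U \<in> (\<lambda>x. ball x (r x)) ` F" "B \<subseteq> U" for U B
      using that near mu_of_isolated[OF isolated] by blast
  qed (use \<open>bounded A\<close> \<open>A \<subseteq> (\<Union>x\<in>F. ball x (r x))\<close> in auto)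
qed

theorem theorem5p17:
  shows "(\<forall>g :: 'a::euclidean_space \<Rightarrow> bool. loc_finite (supp2 g) \<longrightarrow>
            b2_measure (mu_of g) \<and> b2_derivable (mu_of g) \<and> (\<forall>x. b2_deriv (mu_of g) x = g x))
       \<and> (\<forall>\<mu> :: 'a set \<Rightarrow> bool. b2_measure \<mu> \<and> b2_derivable \<mu> \<longrightarrow>
            (\<exists>!g. loc_finite (supp2 g) \<and> (\<forall>A. bounded A \<longrightarrow> \<mu> A = mu_of g A))
          \<and> (\<forall>g. loc_finite (supp2 g) \<and> (\<forall>A. bounded A \<longrightarrow> \<mu> A = mu_of g A)
                 \<longrightarrow> (\<forall>x. b2_deriv \<mu> x = g x)))"
proof (intro conjI allI impI)
  fix g :: "'a \<Rightarrow> bool"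
  assume lf: "loc_finite (supp2 g)"
  show "b2_measure (mu_of g)"
    using b2_measure_mu_of[OF lf] .
  show "b2_derivable (mu_of g)"
    unfolding b2_derivable_def b2_derivable_at_iff using mu_of_has_deriv[OF lf] by blast
  show "b2_deriv (mu_of g) x = g x" for x
    using mu_of_has_deriv[OF lf] by (rule b2_deriv_eqI)
next
  fix \<mu> :: "'a set \<Rightarrow> bool"
  assume "b2_measure \<mu> \<and> b2_derivable \<mu>"
  then show "\<exists>!g. loc_finite (supp2 g) \<and> (\<forall>A. bounded A \<longrightarrow> \<mu> A = mu_of g A)"
  proof (intro ex1I[of _ "\<lambda>y. \<mu> {y}"])
    fix g
    assume "loc_finite (supp2 g) \<and> (\<forall>A. bounded A \<longrightarrow> \<mu> A = mu_of g A)"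
    then have "\<mu> {y} = g y" for y
      using mu_of_singleton[of g y] by auto
    then show "g = (\<lambda>y. \<mu> {y})"
      by auto
  qed (use b2_derivable_measure_eq_mu_of in blast)
next
  fix \<mu> :: "'a set \<Rightarrow> bool" and g x
  assume "loc_finite (supp2 g) \<and> (\<forall>A. bounded A \<longrightarrow> \<mu> A = mu_of g A)"
  then have "b2_has_deriv \<mu> x (g x)"
    using b2_has_deriv_cong[of \<mu> "mu_of g"] mu_of_has_deriv by blast
  then show "b2_deriv \<mu> x = g x"
    by (rule b2_deriv_eqI)
qed

end
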